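(* Let $d\ge 2$ and $n_1,\ldots,n_d\ge 1$ be integers, and let $\mathcal{T}\in\mathbb{R}^{n_1\times\cdots\times n_d}$, $\mathcal{T}\neq 0$. Let $[d]=\bigcup_{j=1}^m\alpha_j$ be the symmetric decomposition for $\mathcal{T}$. Then there exists a best rank one approximation $\mathcal{A}$ of $\mathcal{T}$ such that $\mathcal{A}$ is symmetric with respect to each $\alpha_j$, $j\in[m]$.
   Context: $[d]=\{1,\ldots,d\}$. $\mathbb{R}^{n_1\times\cdots\times n_d}=\otimes_{j=1}^d\mathbb{R}^{n_j}$ is the space of real $d$-tensors $\mathcal{T}=[t_{i_1,\ldots,i_d}]$, with inner product $\langle\mathcal{S},\mathcal{T}\rangle=\sum s_{i_1,\ldots,i_d}t_{i_1,\ldots,i_d}$ and norm $\|\mathcal{T}\|=\sqrt{\langle\mathcal{T},\mathcal{T}\rangle}$. For $\mathbf{x}_j\in\mathbb{R}^{n_j}$, $\otimes_{j=1}^d\mathbf{x}_j$ is the tensor with entries $\prod_{j=1}^d x_{i_j,j}$. $\mathrm{S}^{n-1}$ is the unit sphere in $\mathbb{R}^n$ (Euclidean norm). A best rank one approximation of $\mathcal{T}$ is a tensor $a\otimes_{j=1}^d\mathbf{u}_j$ with $a\in\mathbb{R}$, $\mathbf{u}_j\in\mathrm{S}^{n_j-1}$, attaining $\min_{s\in\mathbb{R},\,\mathbf{x}_j\in\mathrm{S}^{n_j-1}}\|\mathcal{T}-s\otimes_{j=1}^d\mathbf{x}_j\|$. For $\alpha\subseteq[d]$ with $|\alpha|\ge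 2$, a tensor is symmetric with respect to $\alpha$ if $n_p=n_q$ for all $p,q\in\alpha$ and its entry $t_{i_1,\ldots,i_d}$ is unchanged when any two indices $i_p,i_q$ with $p,q\in\alpha$ are interchanged; every tensor is by convention symmetric with respect to each singleton $\{i\}$. The symmetric decomposition of $\mathcal{T}$ is the unique partition $[d]=\bigcup_{j=1}^m\alpha_j$ into nonempty disjoint sets such that $\mathcal{T}$ is symmetric with respect to each $\alpha_j$, and for $j\neq k$, $p\in\alpha_j$, $q\in\alpha_k$, $\mathcal{T}$ is not symmetric with respect to $\{p,q\}$. *)

theory Defs
  imports "HOL-Analysis.Analysis" "HOL-Library.Disjoint_Sets"
begin

text \<open>A real d-tensor of format n_0 x ... x n_(d-1) is a function on index tuples
  (i_0,...,i_(d-1)), represented as functions nat => nat, with 0 <= i_j < n_j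
  (0-based indices); only values on the index set matter.\<close>

type_synonym tensor = "(nat \<Rightarrow> nat) \<Rightarrow> real"

definition idx :: "nat \<Rightarrow> (nat \<Rightarrow> nat) \<Rightarrow> (nat \<Rightarrow> nat) set" where
  "idx d n = PiE {..<d} (\<lambda>j. {..<n j})"

definition tinner :: "nat \<Rightarrow> (nat \<Rightarrow> nat) \<Rightarrow> tensor \<Rightarrow> tensor \<Rightarrow> real" where
  "tinner d n S T = (\<Sum>i\<in>idx d n. S i * T i)"

definition tnorm :: "nat \<Rightarrow> (nat \<Rightarrow> nat) \<Rightarrow> tensor \<Rightarrow> real" where
  "tnorm d n T = sqrt (tinner d n T T)"

definition rank_one :: "nat \<Rightarrow> real \<Rightarrow> (nat \<Rightarrow> nat \<Rightarrow> real) \<Rightarrow> tensor" where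
  "rank_one d s x = (\<lambda>i. s * (\<Prod>j<d. x j (i j)))"

definition on_sphere :: "nat \<Rightarrow> (nat \<Rightarrow> real) \<Rightarrow> bool" where
  "on_sphere m v \<longleftrightarrow> (\<Sum>k<m. (v k)\<^sup>2) = 1"

definition best_rank_one_approx :: "nat \<Rightarrow> (nat \<Rightarrow> nat) \<Rightarrow> tensor \<Rightarrow> tensor \<Rightarrow> bool" where
  "best_rank_one_approx d n T A \<longleftrightarrow>
     (\<exists>a u. (\<forall>j<d. on_sphere (n j) (u j)) \<and> A = rank_one d a u \<and>
        (\<forall>s x. (\<forall>j<d. on_sphere (n j) (x j)) \<longrightarrow>
            tnorm d n (\<lambda>i. T i - A i) \<le> tnorm d n (\<lambda>i. T i - rank_one d s x i)))"

definition sym_wrt :: "nat \<Rightarrow> (nat \<Rightarrow> nat) \<Rightarrow> tensor \<Rightarrow> nat set \<Rightarrow> bool" where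
  "sym_wrt d n T \<alpha> \<longleftrightarrow>
     (\<forall>p\<in>\<alpha>. \<forall>q\<in>\<alpha>. n p = n q) \<and>
     (\<forall>i\<in>idx d n. \<forall>p\<in>\<alpha>. \<forall>q\<in>\<alpha>. T (i(p := i q, q := i p)) = T i)"

definition sym_decomposition :: "nat \<Rightarrow> (nat \<Rightarrow> nat) \<Rightarrow> tensor \<Rightarrow> nat set set \<Rightarrow> bool" where
  "sym_decomposition d n T P \<longleftrightarrow>
     partition_on {..<d} P \<and>
     (\<forall>\<alpha>\<in>P. sym_wrt d n T \<alpha>) \<and>
     (\<forall>\<alpha>\<in>P. \<forall>\<beta>\<in>P. \<alpha> \<noteq> \<beta> \<longrightarrow> (\<forall>p\<in>\<alpha>. \<forall>q\<in>\<beta>. \<not> sym_wrt d n T {p, q}))"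

end

theory Submission
  imports Defs
begin

text \<open>A best rank one approximation is \<open>\<langle>T, \<otimes>x\<^sub>j\<rangle> \<otimes> x\<^sub>j\<close> for a tuple of unit vectors
  maximising \<open>\<bar>\<langle>T, \<otimes>x\<^sub>j\<rangle>\<bar>\<close>. Among all maximisers choose one that also maximises the energy
  \<open>\<Sum>\<^sub>\<alpha> \<parallel>\<Sum>\<^sub>a\<^sub>\<in>\<^sub>\<alpha> x\<^sub>a\<parallel>\<^sup>2\<close> of the blocks. If two vectors \<open>x\<^sub>p \<noteq> x\<^sub>q\<close> of one block differed,
  freezing all other slots leaves a symmetric bilinear form \<open>B\<close> with \<open>\<bar>B(u,u)\<bar> \<le> M\<parallel>u\<parallel>\<^sup>2\<close> and
  \<open>\<bar>B(x\<^sub>p,x\<^sub>q)\<bar> = M\<close>; polarisation then shows that \<open>x\<^sub>p + x\<^sub>q\<close> (or \<open>x\<^sub>p\<close> if it vanishes) is a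
  maximising direction of \<open>B\<close>, and putting a suitably signed unit multiple of it into both slots
  is again a maximiser with strictly larger energy.\<close>

text \<open>Entries outside the format are fixed to \<open>0\<close>, which makes the set compact.\<close>

definition unit_frames :: "nat \<Rightarrow> (nat \<Rightarrow> nat) \<Rightarrow> (nat \<Rightarrow> nat \<Rightarrow> real) set" where
  "unit_frames d n =
     {x. (\<forall>j<d. on_sphere (n j) (x j)) \<and> (\<forall>j k. (d \<le> j \<or> n j \<le> k) \<longrightarrow> x j k = 0)}"

definition tensor_form :: "nat \<Rightarrow> (nat \<Rightarrow> nat) \<Rightarrow> tensor \<Rightarrow> (nat \<Rightarrow> nat \<Rightarrow> real) \<Rightarrow> real" where
  "tensor_form d n T x = (\<Sum>i\<in>idx d n. T i * (\<Prod>j<d. x j (i j)))"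

lemma sum_remove2:
  fixes g :: "'a \<Rightarrow> 'b::comm_monoid_add"
  assumes "finite A" "p \<in> A" "q \<in> A" "p \<noteq> q"
  shows "sum g A = g p + g q + sum g (A - {p, q})"
proof -
  have "sum g A = g p + sum g (A - {p})" using assms by (simp add: sum.remove)
  also have "sum g (A - {p}) = g q + sum g (A - {p} - {q})" using assms by (intro sum.remove) auto
  finally show ?thesis by (simp add: add.assoc Diff_insert2[of A p "{q}"])
qed

lemma prod_remove2:
  fixes g :: "'a \<Rightarrow> 'b::comm_monoid_mult"
  assumes "finite A" "p \<in> A" "q \<in> A" "p \<noteq> q"
  shows "prod g A = g p * g q * prod g (A - {p, q})"
proof -
  have "prod g A = g p * prod g (A - {p})" using assms by (simp add: prod.remove)
  also have "prod g (A - {p}) = g q * prod g (A - {p} - {q})" using assms by (intro prod.remove) auto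
  finally show ?thesis by (simp add: mult.assoc Diff_insert2[of A p "{q}"])
qed

lemma compact_PiE_UNIV:
  fixes S :: "'i \<Rightarrow> 'b::topological_space set"
  assumes "\<And>i. compact (S i)"
  shows "compact (PiE UNIV S)"
proof -
  have "compactin (product_topology (\<lambda>i. euclidean) UNIV) (PiE UNIV S)"
    using assms by (simp add: compactin_PiE)
  then show ?thesis by (simp add: euclidean_product_topology)
qed

lemma continuous_on_entry: "continuous_on S (\<lambda>x::nat \<Rightarrow> nat \<Rightarrow> real. x j k)"
proof -
  have "continuous_on UNIV (\<lambda>x::nat \<Rightarrow> nat \<Rightarrow> real. x j)" by simp
  then have "continuous_on UNIV (\<lambda>x::nat \<Rightarrow> nat \<Rightarrow> real. x j k)"
    by (rule continuous_on_product_then_coordinatewise)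
  then show ?thesis using continuous_on_subset by blast
qed

lemma continuous_on_tensor_form: "continuous_on S (tensor_form d n T)"
  unfolding tensor_form_def by (intro continuous_intros continuous_on_entry)

lemma unit_frames_bounded_entry:
  assumes "x \<in> unit_frames d n"
  shows "\<bar>x j k\<bar> \<le> 1"
proof (cases "j < d \<and> k < n j")
  case True
  then have "(x j k)\<^sup>2 \<le> (\<Sum>k<n j. (x j k)\<^sup>2)"
    by (intro member_le_sum) auto
  also have "\<dots> = 1" using assms True by (simp add: unit_frames_def on_sphere_def)
  finally show ?thesis using abs_square_le_1 by blast
next
  case False
  then show ?thesis using assms by (auto simp: unit_frames_def)
qed

lemma compact_unit_frames: "compact (unit_frames d n)"
proof -
  let ?C = "PiE UNIV (\<lambda>j. PiE UNIV (\<lambda>k. {-1..1::real}))"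
  have "closed (unit_frames d n)"
    unfolding unit_frames_def on_sphere_def
    by (intro closed_Collect_conj closed_Collect_all closed_Collect_imp closed_Collect_eq)
      (auto intro!: continuous_intros continuous_on_entry)
  moreover have "compact ?C"
    by (intro compact_PiE_UNIV) auto
  moreover have "unit_frames d n \<subseteq> ?C"
    using unit_frames_bounded_entry by (fastforce simp: abs_le_iff)
  ultimately show ?thesis
    by (metis compact_Int_closed inf.absorb_iff2)
qed

lemma unit_frames_nonempty:
  assumes "\<forall>j<d. n j \<ge> 1"
  shows "unit_frames d n \<noteq> {}"
proof -
  define e :: "nat \<Rightarrow> nat \<Rightarrow> real" where "e = (\<lambda>j k. if j < d \<and> k = 0 then 1 else 0)"
  have "(\<Sum>k<n j. (e j k)\<^sup>2) = 1" if "j < d" for j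
  proof -
    have "(\<Sum>k<n j. (e j k)\<^sup>2) = (\<Sum>k<n j. if k = 0 then 1 else 0)"
      using that by (intro sum.cong) (auto simp: e_def)
    then show ?thesis using assms that by (simp add: Suc_le_eq)
  qed
  then have "e \<in> unit_frames d n"
    using assms by (auto simp: unit_frames_def on_sphere_def e_def Suc_le_eq)
  then show ?thesis by blast
qed

lemma unit_frames_truncate:
  assumes "\<forall>j<d. on_sphere (n j) (y j)"
  obtains y' where "y' \<in> unit_frames d n" "tensor_form d n T y' = tensor_form d n T y"
proof
  define y' where "y' = (\<lambda>j k. if j < d \<and> k < n j then y j k else 0)"
  have "on_sphere (n j) (y' j)" if "j < d" for j
  proof -
    have "(\<Sum>k<n j. (y' j k)\<^sup>2) = (\<Sum>k<n j. (y j k)\<^sup>2)"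
      using that by (intro sum.cong) (auto simp: y'_def)
    then show ?thesis using assms that unfolding on_sphere_def by simp
  qed
  then show "y' \<in> unit_frames d n" by (auto simp: unit_frames_def y'_def)
  have "(\<Prod>j<d. y' j (i j)) = (\<Prod>j<d. y j (i j))" if "i \<in> idx d n" for i
    using that by (intro prod.cong) (auto simp: y'_def idx_def)
  then show "tensor_form d n T y' = tensor_form d n T y"
    unfolding tensor_form_def by (intro sum.cong) auto
qed

lemma sum_sq_rank_one_factor:
  assumes "\<forall>j<d. on_sphere (n j) (x j)"
  shows "(\<Sum>i\<in>idx d n. (\<Prod>j<d. x j (i j))\<^sup>2) = 1"
proof -
  have "(\<Sum>i\<in>idx d n. (\<Prod>j<d. x j (i j))\<^sup>2) = (\<Prod>j<d. \<Sum>k<n j. (x j k)\<^sup>2)"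
    unfolding idx_def prod_power_distrib by (rule prod_sum_PiE[symmetric]) auto
  also have "\<dots> = 1" using assms unfolding on_sphere_def by simp
  finally show ?thesis .
qed

lemma tinner_self_nonneg: "tinner d n S S \<ge> 0"
  unfolding tinner_def by (intro sum_nonneg) simp

lemma tnorm_diff_rank_one_sq:
  assumes "\<forall>j<d. on_sphere (n j) (x j)"
  shows "(tnorm d n (\<lambda>i. T i - rank_one d s x i))\<^sup>2 = tinner d n T T - 2 * s * tensor_form d n T x + s\<^sup>2"
proof -
  have "(T i - rank_one d s x i) * (T i - rank_one d s x i)
      = T i * T i - 2 * s * (T i * (\<Prod>j<d. x j (i j))) + s\<^sup>2 * (\<Prod>j<d. x j (i j))\<^sup>2" for i
    unfolding rank_one_def by (simp add: power2_eq_square algebra_simps)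
  then have "tinner d n (\<lambda>i. T i - rank_one d s x i) (\<lambda>i. T i - rank_one d s x i)
      = tinner d n T T - 2 * s * tensor_form d n T x + s\<^sup>2"
    using sum_sq_rank_one_factor[OF assms]
    by (simp add: tinner_def tensor_form_def sum_subtractf sum.distrib sum_distrib_left
        flip: sum_distrib_left[of "s\<^sup>2"])
  then show ?thesis unfolding tnorm_def by (metis real_sqrt_pow2 tinner_self_nonneg)
qed

text \<open>Minimising \<open>\<parallel>T - s \<otimes>x\<^sub>j\<parallel>\<^sup>2 = \<parallel>T\<parallel>\<^sup>2 - 2 s f + s\<^sup>2\<close> over \<open>s\<close> gives \<open>\<parallel>T\<parallel>\<^sup>2 - f\<^sup>2\<close>,
  where \<open>f = \<langle>T, \<otimes>x\<^sub>j\<rangle>\<close>.\<close>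

lemma best_rank_one_approx_if_max:
  assumes x: "x \<in> unit_frames d n"
    and max: "\<forall>y\<in>unit_frames d n. \<bar>tensor_form d n T y\<bar> \<le> \<bar>tensor_form d n T x\<bar>"
  shows "best_rank_one_approx d n T (rank_one d (tensor_form d n T x) x)"
proof -
  define f where "f = tensor_form d n T x"
  have sph: "\<forall>j<d. on_sphere (n j) (x j)" using x by (simp add: unit_frames_def)
  have "tnorm d n (\<lambda>i. T i - rank_one d f x i) \<le> tnorm d n (\<lambda>i. T i - rank_one d s y i)"
    if y: "\<forall>j<d. on_sphere (n j) (y j)" for s y
  proof -
    define g where "g = tensor_form d n T y"
    obtain y' where "y' \<in> unit_frames d n" "tensor_form d n T y' = g"
      using unit_frames_truncate[OF y] unfolding g_def by blast
    then have "\<bar>g\<bar> \<le> \<bar>f\<bar>" using max unfolding f_def by blast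
    then have "g\<^sup>2 \<le> f\<^sup>2" by (simp add: abs_le_square_iff)
    moreover have "0 \<le> s\<^sup>2 + g\<^sup>2 - 2 * s * g"
      using zero_le_power2[of "s - g"] unfolding power2_diff .
    ultimately have "tinner d n T T - 2 * f * f + f\<^sup>2 \<le> tinner d n T T - 2 * s * g + s\<^sup>2"
      by (simp add: power2_eq_square)
    then have "(tnorm d n (\<lambda>i. T i - rank_one d f x i))\<^sup>2
        \<le> (tnorm d n (\<lambda>i. T i - rank_one d s y i))\<^sup>2"
      by (simp add: tnorm_diff_rank_one_sq[OF sph] tnorm_diff_rank_one_sq[OF y] f_def g_def)
    then show ?thesis by (rule power2_le_imp_le) (simp add: tnorm_def tinner_self_nonneg)
  qed
  then show ?thesis unfolding best_rank_one_approx_def f_def using sph by blast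
qed

lemma sym_wrt_rank_one:
  assumes "\<alpha> \<subseteq> {..<d}" "\<forall>p\<in>\<alpha>. \<forall>q\<in>\<alpha>. n p = n q" "\<forall>p\<in>\<alpha>. \<forall>q\<in>\<alpha>. x p = x q"
  shows "sym_wrt d n (rank_one d a x) \<alpha>"
proof -
  have "(\<Prod>j<d. x j ((i(p := i q, q := i p)) j)) = (\<Prod>j<d. x j (i j))"
    if pq: "p \<in> \<alpha>" "q \<in> \<alpha>" "p \<noteq> q" for i p q
  proof -
    let ?i' = "i(p := i q, q := i p)"
    have fin: "finite {..<d}" and mem: "p \<in> {..<d}" "q \<in> {..<d}" using pq assms(1) by auto
    have "(\<Prod>j\<in>{..<d} - {p, q}. x j (?i' j)) = (\<Prod>j\<in>{..<d} - {p, q}. x j (i j))"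
      by (intro prod.cong) auto
    moreover have "x p = x q" using pq assms(3) by blast
    then have "x p (?i' p) * x q (?i' q) = x p (i p) * x q (i q)"
      using pq by simp
    ultimately show ?thesis
      unfolding prod_remove2[OF fin mem \<open>p \<noteq> q\<close>, of "\<lambda>j. x j (?i' j)"]
        prod_remove2[OF fin mem \<open>p \<noteq> q\<close>, of "\<lambda>j. x j (i j)"] by simp
  qed
  then have "rank_one d a x (i(p := i q, q := i p)) = rank_one d a x i"
    if "p \<in> \<alpha>" "q \<in> \<alpha>" for i p q
    using that by (cases "p = q") (simp_all add: rank_one_def)
  then show ?thesis using assms(2) unfolding sym_wrt_def by blast
qed

definition slot_form :: "nat \<Rightarrow> (nat \<Rightarrow> nat) \<Rightarrow> tensor \<Rightarrow> nat \<Rightarrow> nat \<Rightarrow> (nat \<Rightarrow> nat \<Rightarrow> real)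
    \<Rightarrow> (nat \<Rightarrow> real) \<Rightarrow> (nat \<Rightarrow> real) \<Rightarrow> real" where
  "slot_form d n T p q x u v =
     (\<Sum>i\<in>idx d n. T i * u (i p) * v (i q) * (\<Prod>j\<in>{..<d} - {p, q}. x j (i j)))"

lemma tensor_form_upd2:
  assumes "p < d" "q < d" "p \<noteq> q"
  shows "tensor_form d n T (x(p := u, q := v)) = slot_form d n T p q x u v"
proof -
  have fin: "finite {..<d}" and mem: "p \<in> {..<d}" "q \<in> {..<d}" using assms by auto
  have "(\<Prod>j\<in>{..<d} - {p, q}. (x(p := u, q := v)) j (i j)) = (\<Prod>j\<in>{..<d} - {p, q}. x j (i j))"
    for i by (intro prod.cong) auto
  then have "(\<Prod>j<d. (x(p := u, q := v)) j (i j))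
      = u (i p) * v (i q) * (\<Prod>j\<in>{..<d} - {p, q}. x j (i j))" for i
    using assms by (simp add: prod_remove2[OF fin mem assms(3)])
  then show ?thesis
    unfolding tensor_form_def slot_form_def by (simp add: mult.assoc)
qed

lemma tensor_form_eq_slot_form:
  assumes "p < d" "q < d" "p \<noteq> q"
  shows "tensor_form d n T x = slot_form d n T p q x (x p) (x q)"
  using tensor_form_upd2[OF assms, of n T x "x p" "x q"] by simp

lemma slot_form_commute:
  assumes "p < d" "q < d" "n p = n q"
    and sym: "\<forall>i\<in>idx d n. T (i(p := i q, q := i p)) = T i"
  shows "slot_form d n T p q x u v = slot_form d n T p q x v u"
proof -
  let ?s = "\<lambda>i::nat \<Rightarrow> nat. i(p := i q, q := i p)"
  have "?s i \<in> idx d n" if "i \<in> idx d n" for i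
    using that assms by (auto simp: idx_def PiE_iff extensional_def) (metis lessThan_iff)+
  moreover have "?s (?s i) = i" for i
    by auto
  moreover have "(\<Prod>j\<in>{..<d} - {p, q}. x j (?s i j)) = (\<Prod>j\<in>{..<d} - {p, q}. x j (i j))" for i
    by (intro prod.cong) auto
  ultimately show ?thesis
    unfolding slot_form_def using sym
    by (intro sum.reindex_bij_witness[of _ ?s ?s]) (auto simp: algebra_simps)
qed

lemma slot_form_scale:
  "slot_form d n T p q x (\<lambda>k. c * u k) (\<lambda>k. e * v k) = c * e * slot_form d n T p q x u v"
  unfolding slot_form_def by (simp add: sum_distrib_left algebra_simps)

lemma slot_form_polarization:
  "slot_form d n T p q x (\<lambda>k. u k + v k) (\<lambda>k. u k + v k)
     - slot_form d n T p q x (\<lambda>k. u k - v k) (\<lambda>k. u k - v k)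
   = 2 * slot_form d n T p q x u v + 2 * slot_form d n T p q x v u"
  unfolding slot_form_def
  by (simp add: sum_subtractf[symmetric] sum_distrib_left sum.distrib[symmetric] algebra_simps)

definition vinner :: "nat \<Rightarrow> (nat \<Rightarrow> real) \<Rightarrow> (nat \<Rightarrow> real) \<Rightarrow> real" where
  "vinner m u v = (\<Sum>k<m. u k * v k)"

lemma vinner_self: "vinner m u u = (\<Sum>k<m. (u k)\<^sup>2)"
  unfolding vinner_def by (simp add: power2_eq_square)

lemma vinner_self_nonneg: "vinner m u u \<ge> 0"
  unfolding vinner_self by (intro sum_nonneg) simp

lemma vinner_self_eq_0D:
  assumes "vinner m u u = 0" "k < m"
  shows "u k = 0"
  using assms unfolding vinner_self by (subst (asm) sum_nonneg_eq_0_iff) auto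

lemma on_sphere_normalized:
  assumes "vinner m w w \<noteq> 0"
  shows "on_sphere m (\<lambda>k. (1 / sqrt (vinner m w w)) * w k)"
proof -
  have "(\<Sum>k<m. ((1 / sqrt (vinner m w w)) * w k)\<^sup>2) = vinner m w w / (sqrt (vinner m w w))\<^sup>2"
    unfolding vinner_self sum_divide_distrib by (intro sum.cong) (simp_all add: power_divide)
  then show ?thesis
    using assms vinner_self_nonneg[of m w] by (simp add: on_sphere_def)
qed

lemma unit_frames_upd2:
  assumes "x \<in> unit_frames d n" "p < d" "q < d" "n p = n q"
    and "\<forall>k\<ge>n p. u k = 0" "\<forall>k\<ge>n p. v k = 0" "on_sphere (n p) u" "on_sphere (n p) v"
  shows "x(p := u, q := v) \<in> unit_frames d n"
  using assms unfolding unit_frames_def by auto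

lemma slot_form_diag_bound:
  assumes x: "x \<in> unit_frames d n" and pq: "p < d" "q < d" "p \<noteq> q" "n p = n q"
    and max: "\<forall>y\<in>unit_frames d n. \<bar>tensor_form d n T y\<bar> \<le> M"
    and u: "\<forall>k\<ge>n p. u k = 0"
  shows "\<bar>slot_form d n T p q x u u\<bar> \<le> M * vinner (n p) u u"
proof (cases "vinner (n p) u u = 0")
  case True
  then have "u = (\<lambda>k. 0 * u k)" using u vinner_self_eq_0D[of "n p" u] by (metis not_le mult_zero_left)
  then show ?thesis using True slot_form_scale[of d n T p q x 0 u 0 u] by simp
next
  case False
  define t where "t = sqrt (vinner (n p) u u)"
  define u' where "u' = (\<lambda>k. (1 / t) * u k)"
  have "on_sphere (n p) u'"
    using on_sphere_normalized[OF False] by (simp add: u'_def t_def)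
  then have "x(p := u', q := u') \<in> unit_frames d n"
    using unit_frames_upd2[OF x pq(1,2,4)] u by (simp add: u'_def)
  then have "\<bar>slot_form d n T p q x u' u'\<bar> \<le> M"
    using max tensor_form_upd2[OF pq(1-3)] by metis
  moreover have "slot_form d n T p q x u' u' = slot_form d n T p q x u u / vinner (n p) u u"
    using vinner_self_nonneg[of "n p" u]
    unfolding u'_def slot_form_scale by (simp add: t_def power_divide flip: power2_eq_square)
  moreover have "vinner (n p) u u > 0"
    using False vinner_self_nonneg[of "n p" u] by simp
  ultimately show ?thesis by (simp add: abs_div pos_divide_le_eq mult.commute)
qed

text \<open>Polarisation: \<open>B(a+b,a+b) - B(a-b,a-b) = 4 B(a,b)\<close> with \<open>\<parallel>a+b\<parallel>\<^sup>2 + \<parallel>a-b\<parallel>\<^sup>2 = 4\<close> forces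
  \<open>\<bar>B(a+b,a+b)\<bar> = M\<parallel>a+b\<parallel>\<^sup>2\<close>, so \<open>a + b\<close> is a maximising direction unless it vanishes, in which
  case \<open>b = -a\<close> and \<open>a\<close> itself is one.\<close>

lemma maximizer_slot_direction:
  assumes x: "x \<in> unit_frames d n" and pq: "p < d" "q < d" "p \<noteq> q" "n p = n q"
    and sym: "\<forall>i\<in>idx d n. T (i(p := i q, q := i p)) = T i"
    and max: "\<forall>y\<in>unit_frames d n. \<bar>tensor_form d n T y\<bar> \<le> M"
    and xM: "\<bar>tensor_form d n T x\<bar> = M"
    and neq: "x p \<noteq> x q"
  obtains u c where "\<forall>k\<ge>n p. u k = 0" "on_sphere (n p) u" "\<bar>slot_form d n T p q x u u\<bar> = M"
    "\<forall>k. x p k + x q k = c * u k" "\<bar>c\<bar> < 2"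
proof -
  define N where "N = n p"
  define B where "B = slot_form d n T p q x"
  define w where "w = (\<lambda>k. x p k + x q k)"
  define v where "v = (\<lambda>k. x p k - x q k)"
  have a0: "\<forall>k\<ge>N. x p k = 0" and b0: "\<forall>k\<ge>N. x q k = 0"
    using x pq by (auto simp: unit_frames_def N_def)
  then have w0: "\<forall>k\<ge>N. w k = 0" and v0: "\<forall>k\<ge>N. v k = 0"
    by (auto simp: w_def v_def)
  have "vinner N (x p) (x p) = 1" "vinner N (x q) (x q) = 1"
    using x pq by (auto simp: unit_frames_def on_sphere_def vinner_self N_def)
  moreover have "vinner N w w + vinner N v v = 2 * vinner N (x p) (x p) + 2 * vinner N (x q) (x q)"
    unfolding vinner_def w_def v_def by (simp add: sum.distrib[symmetric] sum_distrib_left algebra_simps)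
  ultimately have wv: "vinner N w w + vinner N v v = 4" by simp
  have "vinner N v v \<noteq> 0"
  proof
    assume "vinner N v v = 0"
    then have "x p k = x q k" for k
      using vinner_self_eq_0D[of N v k] a0 b0 by (cases "k < N") (auto simp: v_def)
    then show False using neq by auto
  qed
  then have w4: "vinner N w w < 4" using wv vinner_self_nonneg[of N v] by linarith
  have "\<bar>B w w - B v v\<bar> = 4 * M"
    using slot_form_polarization[of d n T p q x "x p" "x q"] slot_form_commute[OF pq(1,2,4) sym]
      tensor_form_eq_slot_form[OF pq(1-3)] xM
    by (simp add: B_def w_def v_def)
  moreover have "\<bar>B w w\<bar> \<le> M * vinner N w w" "\<bar>B v v\<bar> \<le> M * vinner N v v"
    using slot_form_diag_bound[OF x pq max] w0 v0 by (simp_all add: B_def N_def)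
  moreover have "M * vinner N w w + M * vinner N v v = 4 * M"
    using wv by (metis distrib_left mult.commute)
  ultimately have Bw: "\<bar>B w w\<bar> = M * vinner N w w"
    using abs_triangle_ineq4[of "B w w" "B v v"] by linarith
  show thesis
  proof (cases "vinner N w w = 0")
    case True
    have "x q k = -1 * x p k" for k
      using vinner_self_eq_0D[OF True, of k] a0 b0 by (cases "k < N") (auto simp: w_def)
    then have "x q = (\<lambda>k. -1 * x p k)" by blast
    then have "B (x p) (x q) = - B (x p) (x p)"
      using slot_form_scale[of d n T p q x 1 "x p" "-1" "x p"] by (simp add: B_def)
    then have "\<bar>B (x p) (x p)\<bar> = M"
      using xM tensor_form_eq_slot_form[OF pq(1-3)] by (simp add: B_def)
    moreover have "\<forall>k. x p k + x q k = 0 * x p k"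
      using \<open>x q = _\<close> by simp
    ultimately show thesis
      using that[of "x p" 0] x pq(1) a0 by (simp add: unit_frames_def B_def N_def)
  next
    case False
    define t where "t = sqrt (vinner N w w)"
    have t: "t > 0" "t < 2" "t\<^sup>2 = vinner N w w"
      using False vinner_self_nonneg[of N w] w4 real_sqrt_less_mono[OF w4]
      by (auto simp: t_def)
    define u where "u = (\<lambda>k. (1 / t) * w k)"
    have "on_sphere N u"
      using on_sphere_normalized[OF False] by (simp add: u_def t_def)
    moreover have "\<bar>B u u\<bar> = M"
      using Bw t False vinner_self_nonneg[of N w] unfolding u_def B_def slot_form_scale
      by (simp add: abs_mult power2_eq_square flip: B_def)
    moreover have "\<forall>k. x p k + x q k = t * u k"
      using t by (simp add: u_def w_def)
    ultimately show thesis
      using that[of u t] w0 t by (simp add: u_def B_def N_def)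
  qed
qed

lemma sum_square_scaled_add:
  "(\<Sum>k<m. (c * u k + r k)\<^sup>2) = c\<^sup>2 * vinner m u u + 2 * c * vinner m u r + vinner m r r"
  unfolding vinner_def by (simp add: power2_eq_square sum.distrib sum_distrib_left algebra_simps)

lemma sum_square_scaled_add_less:
  fixes m :: nat and c :: real and u r :: "nat \<Rightarrow> real"
  assumes u: "(\<Sum>k<m. (u k)\<^sup>2) = 1" and c: "\<bar>c\<bar> < 2"
  obtains \<sigma> :: real where "\<sigma>\<^sup>2 = 1"
    "(\<Sum>k<m. (c * u k + r k)\<^sup>2) < (\<Sum>k<m. (2 * \<sigma> * u k + r k)\<^sup>2)"
proof
  define \<sigma> :: real where "\<sigma> = (if vinner m u r \<ge> 0 then 1 else -1)"
  show "\<sigma>\<^sup>2 = 1" by (simp add: \<sigma>_def)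
  have "c\<^sup>2 < 4" using power_strict_mono[of "\<bar>c\<bar>" 2 2] c by simp
  moreover have "c * vinner m u r \<le> \<bar>c\<bar> * \<bar>vinner m u r\<bar>"
    by (metis abs_ge_self abs_mult)
  moreover have "\<bar>c\<bar> * \<bar>vinner m u r\<bar> \<le> 2 * \<bar>vinner m u r\<bar>"
    using c by (intro mult_right_mono) auto
  moreover have "(2 * \<sigma>)\<^sup>2 = 4" "2 * \<sigma> * vinner m u r = 2 * \<bar>vinner m u r\<bar>"
    by (auto simp: \<sigma>_def power_mult_distrib)
  moreover have "vinner m u u = 1" using u by (simp add: vinner_self)
  ultimately show "(\<Sum>k<m. (c * u k + r k)\<^sup>2) < (\<Sum>k<m. (2 * \<sigma> * u k + r k)\<^sup>2)"
    unfolding sum_square_scaled_add by simp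
qed

lemma maximizer_equalize_slots:
  assumes x: "x \<in> unit_frames d n" and pq: "p < d" "q < d" "p \<noteq> q" "n p = n q" "n p \<le> L"
    and sym: "\<forall>i\<in>idx d n. T (i(p := i q, q := i p)) = T i"
    and max: "\<forall>y\<in>unit_frames d n. \<bar>tensor_form d n T y\<bar> \<le> M"
    and xM: "\<bar>tensor_form d n T x\<bar> = M"
    and neq: "x p \<noteq> x q"
  obtains z where "x(p := z, q := z) \<in> unit_frames d n" "\<bar>tensor_form d n T (x(p := z, q := z))\<bar> = M"
    "(\<Sum>k<L. (x p k + x q k + r k)\<^sup>2) < (\<Sum>k<L. (2 * z k + r k)\<^sup>2)"
proof -
  obtain u c where u0: "\<forall>k\<ge>n p. u k = 0" and u: "on_sphere (n p) u"
    and Bu: "\<bar>slot_form d n T p q x u u\<bar> = M" and c: "\<forall>k. x p k + x q k = c * u k" "\<bar>c\<bar> < 2"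
    using maximizer_slot_direction[OF x pq(1-4) sym max xM neq] by blast
  have "(\<Sum>k<L. (u k)\<^sup>2) = (\<Sum>k<n p. (u k)\<^sup>2)"
    using pq(5) u0 by (intro sum.mono_neutral_right) auto
  then have "(\<Sum>k<L. (u k)\<^sup>2) = 1" using u by (simp add: on_sphere_def)
  then obtain \<sigma> where \<sigma>: "\<sigma>\<^sup>2 = 1"
    and less: "(\<Sum>k<L. (c * u k + r k)\<^sup>2) < (\<Sum>k<L. (2 * \<sigma> * u k + r k)\<^sup>2)"
    using sum_square_scaled_add_less c(2) by blast
  define z where "z = (\<lambda>k. \<sigma> * u k)"
  have "on_sphere (n p) z"
    using u \<sigma> unfolding on_sphere_def z_def power_mult_distrib sum_distrib_left[symmetric] by simp
  then have "x(p := z, q := z) \<in> unit_frames d n"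
    using unit_frames_upd2[OF x pq(1,2,4)] u0 by (simp add: z_def)
  moreover have "tensor_form d n T (x(p := z, q := z)) = \<sigma>\<^sup>2 * slot_form d n T p q x u u"
    unfolding tensor_form_upd2[OF pq(1-3)] z_def slot_form_scale by (simp add: power2_eq_square)
  then have "\<bar>tensor_form d n T (x(p := z, q := z))\<bar> = M"
    using Bu \<sigma> by simp
  moreover have "(\<Sum>k<L. (x p k + x q k + r k)\<^sup>2) < (\<Sum>k<L. (2 * z k + r k)\<^sup>2)"
    using less c(1) by (simp add: z_def mult.assoc)
  ultimately show thesis using that by blast
qed

text \<open>Vectors are summed up to index \<open>L\<close>, which is meant to bound all lengths \<open>n j\<close>.\<close>

definition block_energy :: "nat \<Rightarrow> nat set set \<Rightarrow> (nat \<Rightarrow> nat \<Rightarrow> real) \<Rightarrow> real" where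
  "block_energy L P x = (\<Sum>\<alpha>\<in>P. \<Sum>k<L. (\<Sum>a\<in>\<alpha>. x a k)\<^sup>2)"

lemma continuous_on_block_energy: "continuous_on S (block_energy L P)"
  unfolding block_energy_def by (intro continuous_intros continuous_on_entry)

lemma block_energy_upd2_less:
  assumes P: "finite P" "\<alpha> \<in> P" "finite \<alpha>" "\<forall>\<beta>\<in>P - {\<alpha>}. p \<notin> \<beta> \<and> q \<notin> \<beta>"
    and pq: "p \<in> \<alpha>" "q \<in> \<alpha>" "p \<noteq> q"
    and less: "(\<Sum>k<L. (x p k + x q k + (\<Sum>a\<in>\<alpha> - {p, q}. x a k))\<^sup>2)
             < (\<Sum>k<L. (2 * z k + (\<Sum>a\<in>\<alpha> - {p, q}. x a k))\<^sup>2)"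
  shows "block_energy L P x < block_energy L P (x(p := z, q := z))"
proof -
  let ?x' = "x(p := z, q := z)"
  let ?E = "\<lambda>y \<beta>. \<Sum>k<L. (\<Sum>a\<in>\<beta>. y a k)\<^sup>2"
  have "(\<Sum>a\<in>\<alpha> - {p, q}. ?x' a k) = (\<Sum>a\<in>\<alpha> - {p, q}. x a k)" for k
    by (intro sum.cong) auto
  then have "?E x \<alpha> < ?E ?x' \<alpha>"
    using less pq(3) by (simp add: sum_remove2[OF P(3) pq])
  moreover have "?E ?x' \<beta> = ?E x \<beta>" if "\<beta> \<in> P - {\<alpha>}" for \<beta>
  proof -
    have "p \<notin> \<beta>" "q \<notin> \<beta>" using P(4) that by blast+
    then have "(\<Sum>a\<in>\<beta>. ?x' a k) = (\<Sum>a\<in>\<beta>. x a k)" for k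
      by (intro sum.cong) auto
    then show ?thesis by simp
  qed
  ultimately show ?thesis
    unfolding block_energy_def by (simp add: sum.remove[OF P(1,2)])
qed

lemma blockwise_constant_if_max_energy:
  assumes part: "partition_on {..<d} P" and sym: "\<forall>\<alpha>\<in>P. sym_wrt d n T \<alpha>"
    and x: "x \<in> unit_frames d n"
    and max: "\<forall>y\<in>unit_frames d n. \<bar>tensor_form d n T y\<bar> \<le> M"
    and xM: "\<bar>tensor_form d n T x\<bar> = M"
    and energy: "\<forall>y\<in>unit_frames d n. \<bar>tensor_form d n T y\<bar> = M
                   \<longrightarrow> block_energy (\<Sum>j<d. n j) P y \<le> block_energy (\<Sum>j<d. n j) P x"
    and \<alpha>: "\<alpha> \<in> P" "p \<in> \<alpha>" "q \<in> \<alpha>"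
  shows "x p = x q"
proof (rule ccontr)
  assume neq: "x p \<noteq> x q"
  then have "p \<noteq> q" by auto
  have \<alpha>_sub: "\<alpha> \<subseteq> {..<d}" using part \<alpha>(1) by (auto dest: partition_onD1)
  then have pq: "p < d" "q < d" using \<alpha> by auto
  have sym\<alpha>: "sym_wrt d n T \<alpha>" using sym \<alpha>(1) ..
  then have npq: "n p = n q" using \<alpha>(2,3) unfolding sym_wrt_def by blast
  have swap: "\<forall>i\<in>idx d n. T (i(p := i q, q := i p)) = T i"
    using sym\<alpha> \<alpha>(2,3) unfolding sym_wrt_def by blast
  have L: "n p \<le> (\<Sum>j<d. n j)"
    using pq by (intro member_le_sum) auto
  obtain z where z: "x(p := z, q := z) \<in> unit_frames d n"
      "\<bar>tensor_form d n T (x(p := z, q := z))\<bar> = M"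
    and less: "(\<Sum>k<(\<Sum>j<d. n j). (x p k + x q k + (\<Sum>a\<in>\<alpha> - {p, q}. x a k))\<^sup>2)
             < (\<Sum>k<(\<Sum>j<d. n j). (2 * z k + (\<Sum>a\<in>\<alpha> - {p, q}. x a k))\<^sup>2)"
    using maximizer_equalize_slots[OF x pq \<open>p \<noteq> q\<close> npq L swap max xM neq,
        where r = "\<lambda>k. \<Sum>a\<in>\<alpha> - {p, q}. x a k"] by blast
  have "finite P" using finite_elements[OF _ part] by simp
  moreover have "\<forall>\<beta>\<in>P - {\<alpha>}. p \<notin> \<beta> \<and> q \<notin> \<beta>"
  proof
    fix \<beta> assume "\<beta> \<in> P - {\<alpha>}"
    then have "\<beta> \<inter> \<alpha> = {}" using disjointD[OF partition_onD2[OF part] _ \<alpha>(1)] by blast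
    then show "p \<notin> \<beta> \<and> q \<notin> \<beta>" using \<alpha>(2,3) by blast
  qed
  ultimately have "block_energy (\<Sum>j<d. n j) P x < block_energy (\<Sum>j<d. n j) P (x(p := z, q := z))"
    using block_energy_upd2_less[OF _ \<alpha>(1) finite_subset[OF \<alpha>_sub] _ \<alpha>(2,3) \<open>p \<noteq> q\<close> less] by blast
  moreover have "block_energy (\<Sum>j<d. n j) P (x(p := z, q := z)) \<le> block_energy (\<Sum>j<d. n j) P x"
    using bspec[OF energy z(1)] z(2) by (rule mp)
  ultimately show False by linarith
qed

lemma exists_blockwise_constant_maximizer:
  assumes part: "partition_on {..<d} P" and sym: "\<forall>\<alpha>\<in>P. sym_wrt d n T \<alpha>"
    and n: "\<forall>j<d. n j \<ge> 1"
  obtains x where "x \<in> unit_frames d n"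
    "\<forall>y\<in>unit_frames d n. \<bar>tensor_form d n T y\<bar> \<le> \<bar>tensor_form d n T x\<bar>"
    "\<forall>\<alpha>\<in>P. \<forall>p\<in>\<alpha>. \<forall>q\<in>\<alpha>. x p = x q"
proof -
  have cont: "continuous_on S (\<lambda>x. \<bar>tensor_form d n T x\<bar>)" for S
    by (intro continuous_on_rabs continuous_on_tensor_form)
  obtain x0 where x0: "x0 \<in> unit_frames d n"
    "\<forall>y\<in>unit_frames d n. \<bar>tensor_form d n T y\<bar> \<le> \<bar>tensor_form d n T x0\<bar>"
    using continuous_attains_sup[OF compact_unit_frames unit_frames_nonempty[OF n] cont] by blast
  define M where "M = \<bar>tensor_form d n T x0\<bar>"
  define S where "S = unit_frames d n \<inter> {x. \<bar>tensor_form d n T x\<bar> = M}"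
  have "compact S"
    unfolding S_def using compact_unit_frames by (intro compact_Int_closed closed_Collect_eq cont) auto
  moreover have "S \<noteq> {}" using x0 by (auto simp: S_def M_def)
  ultimately obtain x where x: "x \<in> S"
    and energy: "\<forall>y\<in>S. block_energy (\<Sum>j<d. n j) P y \<le> block_energy (\<Sum>j<d. n j) P x"
    using continuous_attains_sup[OF _ _ continuous_on_block_energy] by blast
  have x_frame: "x \<in> unit_frames d n" and xM: "\<bar>tensor_form d n T x\<bar> = M"
    using x by (simp_all add: S_def)
  have max: "\<forall>y\<in>unit_frames d n. \<bar>tensor_form d n T y\<bar> \<le> M"
    using x0 by (simp add: M_def)
  have "\<forall>y\<in>unit_frames d n. \<bar>tensor_form d n T y\<bar> = M
      \<longrightarrow> block_energy (\<Sum>j<d. n j) P y \<le> block_energy (\<Sum>j<d. n j) P x"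
    using energy unfolding S_def by blast
  then have "\<forall>\<alpha>\<in>P. \<forall>p\<in>\<alpha>. \<forall>q\<in>\<alpha>. x p = x q"
    by (intro ballI) (rule blockwise_constant_if_max_energy[OF part sym x_frame max xM])
  with x_frame max xM show thesis by (intro that) simp_all
qed

theorem theorem1p1:
  fixes d :: nat and n :: "nat \<Rightarrow> nat" and T :: tensor and P :: "nat set set"
  assumes "d \<ge> 2"
    and "\<forall>j<d. n j \<ge> 1"
    and "\<exists>i\<in>idx d n. T i \<noteq> 0"
    and "sym_decomposition d n T P"
  shows "\<exists>A. best_rank_one_approx d n T A \<and> (\<forall>\<alpha>\<in>P. sym_wrt d n A \<alpha>)"
proof -
  have part: "partition_on {..<d} P" and sym: "\<forall>\<alpha>\<in>P. sym_wrt d n T \<alpha>"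
    using assms(4) unfolding sym_decomposition_def by blast+
  obtain x where x: "x \<in> unit_frames d n"
    and max: "\<forall>y\<in>unit_frames d n. \<bar>tensor_form d n T y\<bar> \<le> \<bar>tensor_form d n T x\<bar>"
    and const: "\<forall>\<alpha>\<in>P. \<forall>p\<in>\<alpha>. \<forall>q\<in>\<alpha>. x p = x q"
    using exists_blockwise_constant_maximizer[OF part sym assms(2)] by blast
  let ?A = "rank_one d (tensor_form d n T x) x"
  have "best_rank_one_approx d n T ?A"
    using best_rank_one_approx_if_max[OF x max] .
  moreover have "sym_wrt d n ?A \<alpha>" if "\<alpha> \<in> P" for \<alpha>
  proof (rule sym_wrt_rank_one)
    show "\<alpha> \<subseteq> {..<d}" using part that by (auto dest: partition_onD1)
    show "\<forall>p\<in>\<alpha>. \<forall>q\<in>\<alpha>. n p = n q" using sym that unfolding sym_wrt_def by blast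
    show "\<forall>p\<in>\<alpha>. \<forall>q\<in>\<alpha>. x p = x q" using const that by blast
  qed
  ultimately show ?thesis by blast
qed

end
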